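(* Let $q$ be a prime power, $m$ a positive integer, and $n=q^m-1$. Then every $q$-ary cyclotomic coset $C_x=\{xq^\ell\bmod n\mid \ell\in\mathbf{Z}\}$ with $1\le x<q^{\lceil m/2\rceil}+1$ has cardinality $|C_x|=m$. *)

theory Defs
  imports Complex_Main "HOL-Number_Theory.Number_Theory"
begin

text \<open>Exponents range over the naturals; since gcd(q,n)=1 for n = q^m - 1 the sequence
  q^l mod n is purely periodic, so this is the same set as for l ranging over the integers.\<close>
definition cyclotomic_coset :: "nat \<Rightarrow> nat \<Rightarrow> nat \<Rightarrow> nat set" where
  "cyclotomic_coset q n x = {(x * q ^ l) mod n | l. True}"

end

theory Submission
  imports Defs
begin

text \<open>Since \<open>q\<^sup>m = 1\<close> modulo \<open>n = q\<^sup>m - 1\<close>, the map \<open>\<ell> \<mapsto> x q\<^sup>\<ell> mod n\<close> has period \<open>m\<close>, so \<open>C\<^sub>x\<close>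
  has exactly \<open>m\<close> elements unless \<open>x q\<^sup>d \<equiv> x\<close> for some \<open>0 < d < m\<close>. By Bezout the admissible
  shifts \<open>d\<close> are closed under \<open>gcd\<close> with \<open>m\<close>, so such a \<open>d\<close> may be taken to be a proper divisor
  of \<open>m\<close>, i.e. \<open>d \<le> m/2\<close>. But then \<open>n\<close> divides the positive number \<open>x (q\<^sup>d - 1)\<close>, which is
  impossible for \<open>x \<le> q\<^bsup>m - d\<^esup>\<close>, since \<open>q\<^bsup>m - d\<^esup> (q\<^sup>d - 1) < q\<^sup>m - 1\<close>.\<close>

lemma cong_pow_self_minus_one:
  fixes q m :: nat
  assumes "0 < q"
  shows "[q ^ m = 1] (mod q ^ m - 1)"
  using assms by (simp add: cong_altdef_nat Suc_leI)

lemma cong_mult_pow_cancel: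
  fixes q m n i a b :: nat
  assumes "[q ^ m = 1] (mod n)" "i \<le> m" "[a * q ^ i = b * q ^ i] (mod n)"
  shows "[a = b] (mod n)"
proof -
  have "[a * q ^ i * q ^ (m - i) = b * q ^ i * q ^ (m - i)] (mod n)"
    using assms(3) by (rule cong_scalar_right)
  then have "[a * q ^ m = b * q ^ m] (mod n)"
    using assms(2) by (simp add: mult.assoc flip: power_add)
  moreover have "[a * q ^ m = a] (mod n)" "[b * q ^ m = b] (mod n)"
    using cong_scalar_left[OF assms(1)] by simp_all
  ultimately show ?thesis
    by (meson cong_sym cong_trans)
qed

lemma cong_mult_pow_mult:
  fixes x q d n :: nat
  assumes "[x * q ^ d = x] (mod n)"
  shows "[x * q ^ (d * k) = x] (mod n)"
proof (induction k)
  case 0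
  then show ?case by simp
next
  case (Suc k)
  have "x * q ^ (d * Suc k) = x * q ^ (d * k) * q ^ d"
    by (simp add: power_add mult.assoc)
  also have "[\<dots> = x * q ^ d] (mod n)"
    using Suc.IH by (rule cong_scalar_right)
  finally show ?case
    using assms by (rule cong_trans)
qed

lemma cong_mult_pow_gcd:
  fixes x q d e n :: nat
  assumes "[x * q ^ d = x] (mod n)" "[x * q ^ e = x] (mod n)" "d \<noteq> 0"
  shows "[x * q ^ gcd d e = x] (mod n)"
proof -
  obtain u v where bezout: "d * u = e * v + gcd d e"
    using bezout_nat[OF assms(3)] by blast
  have "x * q ^ (d * u) = x * q ^ (e * v) * q ^ gcd d e"
    by (simp add: bezout power_add mult.assoc mult.commute)
  also have "[\<dots> = x * q ^ gcd d e] (mod n)"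
    using cong_mult_pow_mult[OF assms(2)] by (rule cong_scalar_right)
  finally have "[x * q ^ (d * u) = x * q ^ gcd d e] (mod n)" .
  with cong_mult_pow_mult[OF assms(1)] show ?thesis
    by (meson cong_sym cong_trans)
qed

lemma not_cong_mult_pow_self:
  fixes q m d x :: nat
  assumes "2 \<le> q" "0 < d" "d < m" "0 < x" "x \<le> q ^ (m - d)"
  shows "\<not> [x * q ^ d = x] (mod q ^ m - 1)"
proof
  have "1 < q ^ d"
    using assms(1,2) by (intro one_less_power) auto
  assume "[x * q ^ d = x] (mod q ^ m - 1)"
  moreover have "x < x * q ^ d"
    using \<open>1 < q ^ d\<close> assms(4) by simp
  ultimately have "q ^ m - 1 dvd x * (q ^ d - 1)"
    by (simp add: cong_altdef_nat diff_mult_distrib2)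
  moreover have "0 < x * (q ^ d - 1)"
    using \<open>1 < q ^ d\<close> assms(4) by simp
  ultimately have "q ^ m - 1 \<le> x * (q ^ d - 1)"
    by (rule dvd_imp_le)
  also have "\<dots> \<le> q ^ (m - d) * (q ^ d - 1)"
    using assms(5) by simp
  also have "\<dots> = q ^ m - q ^ (m - d)"
    using assms(3) by (simp add: diff_mult_distrib2 flip: power_add)
  finally have "q ^ m - 1 \<le> q ^ m - q ^ (m - d)" .
  moreover have "q \<le> q ^ (m - d)" "q ^ (m - d) \<le> q ^ m"
    using assms(1,3) by (simp_all add: self_le_power)
  ultimately show False
    using assms(1) by linarith
qed

lemma card_cyclotomic_coset_eq:
  fixes q n m x :: nat
  assumes "[q ^ m = 1] (mod n)" "0 < m"
    and aperiodic: "\<And>d. 0 < d \<Longrightarrow> d < m \<Longrightarrow> \<not> [x * q ^ d = x] (mod n)"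
  shows "card (cyclotomic_coset q n x) = m"
proof -
  define f where "f l = x * q ^ l mod n" for l
  have periodic: "f l = f (l mod m)" for l
  proof -
    have "x * q ^ l = x * q ^ (l mod m) * (q ^ m) ^ (l div m)"
      by (simp flip: power_add power_mult)
    also have "[\<dots> = x * q ^ (l mod m) * 1 ^ (l div m)] (mod n)"
      using assms(1) by (intro cong_scalar_left cong_pow)
    finally show ?thesis
      by (simp add: f_def cong_def)
  qed
  have "cyclotomic_coset q n x = f ` {..<m}"
  proof
    show "cyclotomic_coset q n x \<subseteq> f ` {..<m}"
    proof
      fix y
      assume "y \<in> cyclotomic_coset q n x"
      then obtain l where "y = f l"
        by (auto simp: cyclotomic_coset_def f_def)
      then show "y \<in> f ` {..<m}"
        using periodic[of l] assms(2) by auto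
    qed
    show "f ` {..<m} \<subseteq> cyclotomic_coset q n x"
      by (auto simp: cyclotomic_coset_def f_def)
  qed
  moreover have "inj_on f {..<m}"
  proof (rule linorder_inj_onI')
    fix i j
    assume "i \<in> {..<m}" "j \<in> {..<m}" "i < j"
    show "f i \<noteq> f j"
    proof
      have "q ^ j = q ^ (j - i) * q ^ i"
        using \<open>i < j\<close> by (simp flip: power_add)
      moreover assume "f i = f j"
      ultimately have "[x * q ^ i = x * q ^ (j - i) * q ^ i] (mod n)"
        by (simp add: f_def cong_def mult.assoc)
      then have "[x = x * q ^ (j - i)] (mod n)"
        using \<open>j \<in> {..<m}\<close> \<open>i < j\<close> by (auto intro: cong_mult_pow_cancel[OF assms(1), of i])
      moreover have "0 < j - i" "j - i < m"
        using \<open>j \<in> {..<m}\<close> \<open>i < j\<close> by auto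
      ultimately show False
        using aperiodic cong_sym by blast
    qed
  qed
  ultimately show ?thesis
    by (simp add: card_image)
qed

lemma ceiling_half_le_diff_proper_divisor:
  fixes d m :: nat
  assumes "d dvd m" "d < m"
  shows "nat \<lceil>real m / 2\<rceil> \<le> m - d"
proof -
  obtain k where "m = d * k"
    using assms(1) by blast
  moreover have "k \<noteq> 0" "k \<noteq> 1"
    using assms(2) \<open>m = d * k\<close> by auto
  ultimately have "2 \<le> k"
    by simp
  then have "2 * d \<le> m"
    using \<open>m = d * k\<close> by (metis mult.commute mult_le_mono2)
  then show ?thesis
    by (simp add: nat_le_iff ceiling_le_iff)
qed

lemma not_cong_mult_pow_self_below_half:
  fixes q m d x :: nat
  assumes "2 \<le> q" "0 < d" "d < m" "0 < x" "x \<le> q ^ nat \<lceil>real m / 2\<rceil>"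
  shows "\<not> [x * q ^ d = x] (mod q ^ m - 1)"
proof
  have q_pow_m: "[q ^ m = 1] (mod q ^ m - 1)"
    using assms(1) cong_pow_self_minus_one[of q m] by simp
  assume "[x * q ^ d = x] (mod q ^ m - 1)"
  moreover have "[x * q ^ m = x] (mod q ^ m - 1)"
    using cong_scalar_left[OF q_pow_m, of x] by simp
  ultimately have "[x * q ^ gcd d m = x] (mod q ^ m - 1)"
    using \<open>0 < d\<close> by (intro cong_mult_pow_gcd) auto
  moreover have "0 < gcd d m" "gcd d m < m"
    using assms(2) le_less_trans[OF gcd_le1_nat \<open>d < m\<close>] by simp_all
  moreover have "x \<le> q ^ (m - gcd d m)"
    using assms(1,5) ceiling_half_le_diff_proper_divisor[OF gcd_dvd2 \<open>gcd d m < m\<close>]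
    by (meson order_trans power_increasing one_le_numeral)
  ultimately show False
    using not_cong_mult_pow_self[OF assms(1) _ _ assms(4)] by blast
qed

theorem mainTheorem4:
  fixes q m n x :: nat
  assumes "primepow q"
    and "m > 0"
    and "n = q ^ m - 1"
    and "1 \<le> x"
    and "x < q ^ nat \<lceil>real m / 2\<rceil> + 1"
  shows "card (cyclotomic_coset q n x) = m"
proof (rule card_cyclotomic_coset_eq)
  have "2 \<le> q"
    using primepow_gt_Suc_0[OF assms(1)] by simp
  then show "[q ^ m = 1] (mod n)"
    using assms(3) cong_pow_self_minus_one[of q m] by simp
  show "\<not> [x * q ^ d = x] (mod n)" if "0 < d" "d < m" for d
    using not_cong_mult_pow_self_below_half[OF \<open>2 \<le> q\<close> that] assms(3-5) by simp
qed (use assms(2) in simp)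

end
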